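(* Let $v_i$ be a node and let $\mathcal{F}_{v_i}=(\mathcal{F}_{v_i}[1],\dots,\mathcal{F}_{v_i}[p])$ be a fixed enumeration of its maximal frequent nodes, with initial patterns $P_1,\dots,P_p$ and bipartite graphs $G_1,\dots,G_p$ as defined in the context. Then Rule 1 assigns every frequent node $v_r\in\mathcal{U}_{v_i}$ to one and only one pattern $P_j$, i.e., there is exactly one $j\in\{1,\dots,p\}$ with $v_r\in\alpha(P_j,G_j)$.
   Context: Let $\mathcal{A}=\{A_1,\dots,A_m\}$ be binary attributes and $\mathcal{D}$ a dataset of $n$ tuples; for a tuple $t$, $\mathcal{A}_t=\{A_k: t[A_k]\ne 0\}$. Nodes correspond to attribute subsets: node $v_j$ corresponds to $\mathcal{A}_j\subseteq\mathcal{A}$, with bit vector $\mathcal{B}(v_j)\in\{0,1\}^m$ whose bit $k$ is $1$ iff $A_k\in\mathcal{A}_j$. The lattice $\mathcal{L}_{\mathcal{A}_i}$ has as nodes all subsets of $\mathcal{A}_i$; a parent of $v_j$ in it is a node whose set is $\mathcal{A}_j$ plus one more attribute of $\mathcal{A}_i$. Let $Q(v_j,\mathcal{D})=\{t\in\mathcal{D}:\mathcal{A}_j\subseteq\mathcal{A}_t\}$. For a threshold $\tau\in(0,1]$, $v_j$ is frequent iff $|Q(v_j,\mathcal{D})|\ge\tau n$. $\mathcal{U}_{v_i}$ is the set of frequent nodes of $\mathcal{L}_{\mathcal{A}_i}$, and $\mathcal{F}_{v_i}$ (maximal frequent nodes) is the set of frequent nodes of $\mathcal{L}_{\mathcal{A}_i}$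 having no frequent parent in $\mathcal{L}_{\mathcal{A}_i}$. A pattern is a string $P\in\{0,1,X\}^m$; its coverage $\mathrm{COV}(P)$ is the set of nodes $v$ such that for all $k$, $P[k]=1\Rightarrow A_k\in\mathcal{A}_v$ and $P[k]=0\Rightarrow A_k\notin\mathcal{A}_v$. The initial pattern $P_j$ of $v_{j'}=\mathcal{F}_{v_i}[j]$ is obtained from $\mathcal{B}(v_{j'})$ by replacing every $1$ by $X$. The bipartite graph $G_j$ has top-level nodes $\{A_k: A_k\in\mathcal{A}_{j'}\}$, bottom-level nodes $\{P_l:1\le l<j\}$, and an edge $\xi_{k,l}$ from $A_k$ to $P_l$ iff $A_k\in\mathcal{A}_{j'}$ and $P_l[k]=0$ (i.e., $A_k\notin\mathcal{A}_{l'}$ where $v_{l'}=\mathcal{F}_{v_i}[l]$). Rule 1: a node $v_{l'}\in\mathrm{COV}(P_j)$ is assigned to the partition of $P_j$ (written $v_{l'}\in\alpha(P_j,G_j)$) iff for every bottom-level node $P_r$ of $G_j$ there is at least one top-level attribute node $A_k$ with $A_k\in\mathcal{A}_{l'}$ such that the edge $\xi_{k,r}$ belongs to $G_j$; nodes not in $\mathrm{COV}(P_j)$ are not assigned to $P_j$. *)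

theory Defs
  imports Complex_Main
begin

(* Attributes A_1..A_m are represented by the indices 0..m-1 (nat k < m).
   A node is represented by its attribute set (a subset of {..<m}); its bit
   vector is the characteristic function of that set.
   A tuple is a function t :: nat \<Rightarrow> nat (value of attribute k is t k);
   the dataset is a list of tuples, n = length D. *)

definition tuple_attrs :: "nat \<Rightarrow> (nat \<Rightarrow> nat) \<Rightarrow> nat set" where
  "tuple_attrs m t = {k. k < m \<and> t k \<noteq> 0}"

definition Q :: "nat \<Rightarrow> nat set \<Rightarrow> (nat \<Rightarrow> nat) list \<Rightarrow> (nat \<Rightarrow> nat) list" where
  "Q m S D = filter (\<lambda>t. S \<subseteq> tuple_attrs m t) D"

definition frequent :: "nat \<Rightarrow> real \<Rightarrow> (nat \<Rightarrow> nat) list \<Rightarrow> nat set \<Rightarrow> bool" where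
  "frequent m \<tau> D S \<longleftrightarrow> real (length (Q m S D)) \<ge> \<tau> * real (length D)"

definition lattice_nodes :: "nat set \<Rightarrow> nat set set" where
  "lattice_nodes Ai = Pow Ai"

definition is_parent :: "nat set \<Rightarrow> nat set \<Rightarrow> nat set \<Rightarrow> bool" where
  "is_parent Ai S T \<longleftrightarrow> S \<subseteq> Ai \<and> (\<exists>a \<in> Ai - S. T = insert a S)"

definition freq_nodes :: "nat \<Rightarrow> real \<Rightarrow> (nat \<Rightarrow> nat) list \<Rightarrow> nat set \<Rightarrow> nat set set" where
  "freq_nodes m \<tau> D Ai = {S \<in> lattice_nodes Ai. frequent m \<tau> D S}"

definition max_freq_nodes :: "nat \<Rightarrow> real \<Rightarrow> (nat \<Rightarrow> nat) list \<Rightarrow> nat set \<Rightarrow> nat set set" where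
  "max_freq_nodes m \<tau> D Ai =
     {S \<in> freq_nodes m \<tau> D Ai. \<not> (\<exists>T. is_parent Ai S T \<and> frequent m \<tau> D T)}"

datatype psym = P0 | P1 | PX

type_synonym pattern = "nat \<Rightarrow> psym"  (* positions 0..m-1 *)

definition COV :: "nat \<Rightarrow> pattern \<Rightarrow> nat set set" where
  "COV m P = {v. v \<subseteq> {..<m} \<and>
       (\<forall>k<m. (P k = P1 \<longrightarrow> k \<in> v) \<and> (P k = P0 \<longrightarrow> k \<notin> v))}"

definition init_pattern :: "nat set \<Rightarrow> pattern" where
  "init_pattern S = (\<lambda>k. if k \<in> S then PX else P0)"

(* Bipartite graph G_j for the enumeration Fl (0-indexed: Fl ! j is F[j+1]).
   Top-level nodes: attributes of Fl ! j; bottom-level nodes: indices l < j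
   (standing for P_l); edges (k,l) iff k \<in> Fl!j and P_l[k] = 0. *)
definition G_top :: "nat set list \<Rightarrow> nat \<Rightarrow> nat set" where
  "G_top Fl j = Fl ! j"

definition G_bottom :: "nat set list \<Rightarrow> nat \<Rightarrow> nat set" where
  "G_bottom Fl j = {l. l < j}"

definition G_edges :: "nat set list \<Rightarrow> nat \<Rightarrow> (nat \<times> nat) set" where
  "G_edges Fl j = {(k, l). k \<in> G_top Fl j \<and> l \<in> G_bottom Fl j \<and> init_pattern (Fl ! l) k = P0}"

definition alpha :: "nat \<Rightarrow> nat set list \<Rightarrow> nat \<Rightarrow> nat set \<Rightarrow> bool" where
  "alpha m Fl j v \<longleftrightarrow> v \<in> COV m (init_pattern (Fl ! j)) \<and>
     (\<forall>r \<in> G_bottom Fl j. \<exists>k \<in> G_top Fl j. k \<in> v \<and> (k, r) \<in> G_edges Fl j)"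

end

theory Submission
  imports Defs
begin

text \<open>Rule 1 puts a node into the partition of the first pattern P_j whose maximal frequent node
  contains it: an edge from some attribute of v to P_r exists exactly when v is not contained in
  the r-th maximal frequent node. Every frequent node lies below some maximal frequent node, so
  such a first index exists, and a first index is unique.\<close>

lemma alpha_iff_first_superset:
  assumes "v \<subseteq> {..<m}"
  shows "alpha m Fl j v \<longleftrightarrow> v \<subseteq> Fl ! j \<and> (\<forall>r<j. \<not> v \<subseteq> Fl ! r)"
proof -
  have cov: "v \<in> COV m (init_pattern (Fl ! j)) \<longleftrightarrow> v \<subseteq> Fl ! j"
    using assms unfolding COV_def init_pattern_def by (auto split: if_splits)
  have edge: "(k, r) \<in> G_edges Fl j \<longleftrightarrow> k \<in> Fl ! j \<and> r < j \<and> k \<notin> Fl ! r" for k r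
    unfolding G_edges_def G_top_def G_bottom_def init_pattern_def by auto
  show ?thesis unfolding alpha_def cov G_top_def G_bottom_def edge by blast
qed

lemma ex1_first_index:
  assumes "\<exists>x \<in> set xs. P x"
  shows "\<exists>!j. j < length xs \<and> P (xs ! j) \<and> (\<forall>r<j. \<not> P (xs ! r))"
proof -
  obtain i where i: "i < length xs" "P (xs ! i)"
    using assms by (auto simp: in_set_conv_nth)
  define j where "j = (LEAST j. P (xs ! j))"
  have j: "P (xs ! j)" "\<forall>r<j. \<not> P (xs ! r)"
    unfolding j_def using i(2) by (fact LeastI, blast dest: not_less_Least)
  have "j \<le> i"
    unfolding j_def using i(2) by (fact Least_le)
  show ?thesis
  proof (rule ex1I[of _ j])
    show "j < length xs \<and> P (xs ! j) \<and> (\<forall>r<j. \<not> P (xs ! r))"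
      using j \<open>j \<le> i\<close> i(1) by simp
  next
    fix y
    assume "y < length xs \<and> P (xs ! y) \<and> (\<forall>r<y. \<not> P (xs ! r))"
    with j show "y = j"
      by (meson linorder_neqE_nat)
  qed
qed

lemma finite_freq_nodes: "finite Ai \<Longrightarrow> finite (freq_nodes m \<tau> D Ai)"
  unfolding freq_nodes_def lattice_nodes_def by simp

lemma freq_node_subset_max_freq_node:
  assumes "finite Ai" and "v \<in> freq_nodes m \<tau> D Ai"
  shows "\<exists>T \<in> max_freq_nodes m \<tau> D Ai. v \<subseteq> T"
proof -
  obtain T where T: "T \<in> freq_nodes m \<tau> D Ai" "v \<subseteq> T"
    and maximal: "\<forall>T' \<in> freq_nodes m \<tau> D Ai. T \<subseteq> T' \<longrightarrow> T = T'"
    using finite_has_maximal2[OF finite_freq_nodes[OF assms(1)] assms(2)] by blast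
  have "\<not> frequent m \<tau> D T'" if "is_parent Ai T T'" for T'
  proof
    assume "frequent m \<tau> D T'"
    obtain a where a: "a \<in> Ai" "a \<notin> T" and T': "T' = insert a T"
      using \<open>is_parent Ai T T'\<close> unfolding is_parent_def by blast
    have "T' \<in> freq_nodes m \<tau> D Ai"
      using T(1) a(1) T' \<open>frequent m \<tau> D T'\<close> unfolding freq_nodes_def lattice_nodes_def by auto
    with maximal T' have "T = T'" by blast
    with a(2) T' show False by blast
  qed
  then have "T \<in> max_freq_nodes m \<tau> D Ai"
    using T(1) unfolding max_freq_nodes_def by blast
  with T(2) show ?thesis by blast
qed

theorem theorem3:
  fixes m :: nat and D :: "(nat \<Rightarrow> nat) list" and \<tau> :: real
    and Ai :: "nat set" and Fl :: "nat set list" and v :: "nat set"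
  assumes "\<forall>t \<in> set D. \<forall>k < m. t k \<in> {0, 1}"
    and "0 < \<tau>" and "\<tau> \<le> 1"
    and "Ai \<subseteq> {..<m}"
    and "distinct Fl" and "set Fl = max_freq_nodes m \<tau> D Ai"
    and "v \<in> freq_nodes m \<tau> D Ai"
  shows "\<exists>!j. j < length Fl \<and> alpha m Fl j v"
proof -
  have "v \<subseteq> {..<m}"
    using assms(4,7) unfolding freq_nodes_def lattice_nodes_def by auto
  have "finite Ai"
    using assms(4) finite_subset by blast
  then have "\<exists>T \<in> set Fl. v \<subseteq> T"
    unfolding assms(6) using assms(7) by (rule freq_node_subset_max_freq_node)
  then have "\<exists>!j. j < length Fl \<and> v \<subseteq> Fl ! j \<and> (\<forall>r<j. \<not> v \<subseteq> Fl ! r)"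
    by (rule ex1_first_index)
  then show ?thesis
    by (simp only: alpha_iff_first_superset[OF \<open>v \<subseteq> {..<m}\<close>])
qed

end
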